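(* Let $G$ be a graph with no isolated vertices. Then $b_{tR}(G)=1$ if and only if $G$ has an edge $uv$ such that $G-uv$ has no isolated vertices and every $\gamma_{tR}(G)$-function $f=(V_0,V_1,V_2)$ satisfies (i) $G[V_1\cup V_2]-uv$ has an isolated vertex, or (ii) $u\in V_2$ and $v\in \mathrm{epn}(u,V_2)\cap V_0$, or $v\in V_2$ and $u\in\mathrm{epn}(v,V_2)\cap V_0$.
   Context: A TRDF on $G=(V,E)$ is a function $f:V\to\{0,1,2\}$ such that every $v$ with $f(v)=0$ has a neighbor $u$ with $f(u)=2$ and the subgraph induced by $\{v:f(v)>0\}$ has no isolated vertices; $\gamma_{tR}(G)$ is its minimum weight and a $\gamma_{tR}(G)$-function is a TRDF of that weight. A function $f$ is identified with the partition $(V_0,V_1,V_2)$ where $V_i=\{v:f(v)=i\}$. $b_{tR}(G)$ is the minimum $|E'|$ such that $G-E'$ has no isolated vertices and $\gamma_{tR}(G-E')>\gamma_{tR}(G)$ ($\infty$ if none). For $S\subseteq V$ and $v\in S$, $\mathrm{epn}(v,S)=\{w\in V\setminus S: N(w)\cap S=\{v\}\}$. $G[X]$ is the induced subgraph. *)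

theory Defs
  imports Main "HOL-Library.Extended_Nat"
begin

definition simple_graph :: "'a set \<Rightarrow> 'a set set \<Rightarrow> bool" where
  "simple_graph V E \<longleftrightarrow> finite V \<and> (\<forall>e\<in>E. e \<subseteq> V \<and> card e = 2)"

definition nbrs :: "'a set set \<Rightarrow> 'a \<Rightarrow> 'a set" where
  "nbrs E v = {u. {u, v} \<in> E}"

definition no_isolated :: "'a set \<Rightarrow> 'a set set \<Rightarrow> bool" where
  "no_isolated V E \<longleftrightarrow> (\<forall>v\<in>V. \<exists>u. {u, v} \<in> E)"

definition cls :: "'a set \<Rightarrow> ('a \<Rightarrow> nat) \<Rightarrow> nat \<Rightarrow> 'a set" where
  "cls V f i = {v\<in>V. f v = i}"

definition is_TRDF :: "'a set \<Rightarrow> 'a set set \<Rightarrow> ('a \<Rightarrow> nat) \<Rightarrow> bool" where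
  "is_TRDF V E f \<longleftrightarrow>
     (\<forall>v\<in>V. f v \<in> {0, 1, 2}) \<and>
     (\<forall>v\<in>V. f v = 0 \<longrightarrow> (\<exists>u\<in>V. {u, v} \<in> E \<and> f u = 2)) \<and>
     (\<forall>v\<in>V. f v > 0 \<longrightarrow> (\<exists>u\<in>V. {u, v} \<in> E \<and> f u > 0))"

definition weight :: "'a set \<Rightarrow> ('a \<Rightarrow> nat) \<Rightarrow> nat" where
  "weight V f = (\<Sum>v\<in>V. f v)"

definition gamma_tR :: "'a set \<Rightarrow> 'a set set \<Rightarrow> nat" where
  "gamma_tR V E = (LEAST w. \<exists>f. is_TRDF V E f \<and> weight V f = w)"

definition is_gamma_tR_function :: "'a set \<Rightarrow> 'a set set \<Rightarrow> ('a \<Rightarrow> nat) \<Rightarrow> bool" where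
  "is_gamma_tR_function V E f \<longleftrightarrow> is_TRDF V E f \<and> weight V f = gamma_tR V E"

(* total Roman bondage number; Inf {} = \<infinity> in enat *)
definition b_tR :: "'a set \<Rightarrow> 'a set set \<Rightarrow> enat" where
  "b_tR V E = Inf {enat (card E') | E'. E' \<subseteq> E \<and> no_isolated V (E - E')
                     \<and> gamma_tR V (E - E') > gamma_tR V E}"

definition epn :: "'a set \<Rightarrow> 'a set set \<Rightarrow> 'a \<Rightarrow> 'a set \<Rightarrow> 'a set" where
  "epn V E v S = {w\<in>V - S. nbrs E w \<inter> S = {v}}"

definition induced_has_isolated :: "'a set \<Rightarrow> 'a set set \<Rightarrow> bool" where
  "induced_has_isolated X E \<longleftrightarrow> (\<exists>w\<in>X. \<not> (\<exists>x\<in>X. {w, x} \<in> E))"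

end

theory Submission
  imports Defs
begin

(* Deleting edges can only destroy total Roman dominating functions, so gamma_tR(G - uv) exceeds
   gamma_tR(G) exactly when no gamma_tR(G)-function survives as a TRDF of G - uv.  A TRDF f of G
   fails to be one of G - uv precisely when some positive vertex loses its last positive neighbour
   (condition (i)), or some vertex labelled 0 loses its only neighbour labelled 2; since only uv is
   deleted, that vertex is an end of uv and is an external private neighbour of the other end
   with respect to V_2 (condition (ii)).  Finally b_tR(G) = 1 says that a single edge deletion
   suffices, as deleting no edge changes nothing. *)

lemma simple_graph_finite_edges:
  assumes "simple_graph V E"
  shows "finite E"
proof -
  have "E \<subseteq> Pow V" "finite V"
    using assms unfolding simple_graph_def by auto
  then show ?thesis
    by (metis finite_Pow_iff finite_subset)
qed

lemma simple_graph_ex_edge_iff: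
  assumes "simple_graph V E"
  shows "(\<exists>e\<in>E. P e) \<longleftrightarrow> (\<exists>u v. {u, v} \<in> E \<and> P {u, v})"
proof
  assume "\<exists>e\<in>E. P e"
  then obtain e where "e \<in> E" "P e"
    by blast
  moreover from \<open>e \<in> E\<close> obtain u v where "e = {u, v}"
    using assms unfolding simple_graph_def by (metis card_2_iff)
  ultimately show "\<exists>u v. {u, v} \<in> E \<and> P {u, v}"
    by blast
qed blast

lemma is_TRDF_const_two:
  assumes "\<forall>e\<in>E. e \<subseteq> V" and "no_isolated V E"
  shows "is_TRDF V E (\<lambda>_. 2)"
proof -
  have "\<exists>u\<in>V. {u, v} \<in> E" if "v \<in> V" for v
  proof -
    obtain u where "{u, v} \<in> E"
      using assms(2) \<open>v \<in> V\<close> unfolding no_isolated_def by blast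
    moreover from this have "u \<in> V"
      using assms(1) by blast
    ultimately show ?thesis
      by blast
  qed
  then show ?thesis
    by (simp add: is_TRDF_def)
qed

lemma is_TRDF_mono: "E' \<subseteq> E \<Longrightarrow> is_TRDF V E' f \<Longrightarrow> is_TRDF V E f"
  unfolding is_TRDF_def by blast

lemma is_TRDF_iff_dominated:
  assumes "\<forall>v\<in>V. f v \<in> {0, 1, 2}"
  shows "is_TRDF V E f \<longleftrightarrow>
     (\<forall>w\<in>V. 0 < f w \<longrightarrow> (\<exists>x\<in>V. {x, w} \<in> E \<and> 0 < f x)) \<and>
     (\<forall>w\<in>V. f w = 0 \<longrightarrow> (\<exists>x\<in>V. {x, w} \<in> E \<and> f x = 2))"
  using assms unfolding is_TRDF_def by blast

lemma gamma_tR_le_weight: "is_TRDF V E f \<Longrightarrow> gamma_tR V E \<le> weight V f"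
  unfolding gamma_tR_def by (rule Least_le) blast

lemma gamma_tR_attained:
  "is_TRDF V E g \<Longrightarrow> \<exists>f. is_TRDF V E f \<and> weight V f = gamma_tR V E"
  unfolding gamma_tR_def by (rule LeastI_ex) blast

lemma gamma_tR_less_iff_no_gamma_function_survives:
  assumes "simple_graph V E" and "no_isolated V E'" and "E' \<subseteq> E"
  shows "gamma_tR V E < gamma_tR V E' \<longleftrightarrow>
     (\<forall>f. is_gamma_tR_function V E f \<longrightarrow> \<not> is_TRDF V E' f)"
proof
  assume less: "gamma_tR V E < gamma_tR V E'"
  show "\<forall>f. is_gamma_tR_function V E f \<longrightarrow> \<not> is_TRDF V E' f"
  proof (intro allI impI notI)
    fix f
    assume "is_gamma_tR_function V E f" and "is_TRDF V E' f"
    then have "gamma_tR V E' \<le> gamma_tR V E"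
      unfolding is_gamma_tR_function_def using gamma_tR_le_weight by metis
    with less show False
      by simp
  qed
next
  assume none_survives: "\<forall>f. is_gamma_tR_function V E f \<longrightarrow> \<not> is_TRDF V E' f"
  have "\<forall>e\<in>E'. e \<subseteq> V"
    using assms(1,3) unfolding simple_graph_def by blast
  then have "is_TRDF V E' (\<lambda>_. 2)"
    using assms(2) by (rule is_TRDF_const_two)
  then obtain g where g: "is_TRDF V E' g" "weight V g = gamma_tR V E'"
    using gamma_tR_attained by blast
  have "is_TRDF V E g"
    using assms(3) g(1) by (rule is_TRDF_mono)
  then have "gamma_tR V E \<le> gamma_tR V E'"
    using gamma_tR_le_weight g(2) by metis
  moreover have "gamma_tR V E \<noteq> gamma_tR V E'"
    using none_survives g \<open>is_TRDF V E g\<close> unfolding is_gamma_tR_function_def by auto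
  ultimately show "gamma_tR V E < gamma_tR V E'"
    by simp
qed

lemma induced_has_isolated_positive_iff:
  assumes "\<forall>v\<in>V. f v \<le> 2"
  shows "induced_has_isolated (cls V f 1 \<union> cls V f 2) E \<longleftrightarrow>
     (\<exists>w\<in>V. 0 < f w \<and> \<not> (\<exists>x\<in>V. {x, w} \<in> E \<and> 0 < f x))"
proof -
  have "cls V f 1 \<union> cls V f 2 = {v\<in>V. 0 < f v}"
    using assms unfolding cls_def by force
  then show ?thesis
    unfolding induced_has_isolated_def by (auto simp: insert_commute)
qed

lemma private_neighbour_iff_only_two_neighbour:
  assumes "x \<in> V" and "w \<in> V" and "{x, w} \<in> E"
  shows "x \<in> cls V f 2 \<and> w \<in> epn V E x (cls V f 2) \<inter> cls V f 0 \<longleftrightarrow>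
     f x = 2 \<and> f w = 0 \<and> \<not> (\<exists>y\<in>V. {y, w} \<in> E - {{x, w}} \<and> f y = 2)"
proof -
  have "{y, w} = {x, w} \<longleftrightarrow> y = x" if "f y = 2" "f x = 2" "f w = 0" for y
    using that by (auto simp: doubleton_eq_iff)
  then show ?thesis
    using assms unfolding epn_def cls_def nbrs_def by auto
qed

lemma lost_two_neighbour_iff:
  assumes two_dominated: "\<forall>w\<in>V. f w = 0 \<longrightarrow> (\<exists>x\<in>V. {x, w} \<in> E \<and> f x = 2)"
    and uv: "{u, v} \<in> E" "u \<in> V" "v \<in> V"
  shows "(\<exists>w\<in>V. f w = 0 \<and> \<not> (\<exists>x\<in>V. {x, w} \<in> E - {{u, v}} \<and> f x = 2)) \<longleftrightarrow>
     (u \<in> cls V f 2 \<and> v \<in> epn V E u (cls V f 2) \<inter> cls V f 0) \<or>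
     (v \<in> cls V f 2 \<and> u \<in> epn V E v (cls V f 2) \<inter> cls V f 0)"
    (is "?lost \<longleftrightarrow> ?private")
proof -
  have vu: "{v, u} \<in> E" "{{v, u}} = {{u, v}}"
    using uv(1) by (simp_all add: insert_commute)
  have "?lost \<longleftrightarrow>
     (f u = 2 \<and> f v = 0 \<and> \<not> (\<exists>y\<in>V. {y, v} \<in> E - {{u, v}} \<and> f y = 2)) \<or>
     (f v = 2 \<and> f u = 0 \<and> \<not> (\<exists>y\<in>V. {y, u} \<in> E - {{u, v}} \<and> f y = 2))"
    (is "_ \<longleftrightarrow> ?end_lost")
  proof
    assume ?lost
    then obtain w where w: "w \<in> V" "f w = 0"
      and isolated: "\<not> (\<exists>x\<in>V. {x, w} \<in> E - {{u, v}} \<and> f x = 2)"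
      by blast
    then obtain x where x: "x \<in> V" "{x, w} \<in> E" "f x = 2"
      using two_dominated by blast
    then have "{x, w} = {u, v}" "x \<noteq> w"
      using w isolated by auto
    then have "x = u \<and> w = v \<or> x = v \<and> w = u"
      by (metis doubleton_eq_iff)
    then show ?end_lost
      using w x isolated by blast
  qed (use uv in blast)
  also have "\<dots> \<longleftrightarrow> ?private"
    using private_neighbour_iff_only_two_neighbour[OF uv(2,3,1)]
      private_neighbour_iff_only_two_neighbour[OF uv(3,2) vu(1)]
    unfolding vu(2) by blast
  finally show ?thesis .
qed

lemma not_TRDF_delete_edge_iff:
  assumes f: "is_TRDF V E f" and uv: "{u, v} \<in> E" "u \<in> V" "v \<in> V"
  shows "\<not> is_TRDF V (E - {{u, v}}) f \<longleftrightarrow>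
     induced_has_isolated (cls V f 1 \<union> cls V f 2) (E - {{u, v}})
     \<or> (u \<in> cls V f 2 \<and> v \<in> epn V E u (cls V f 2) \<inter> cls V f 0)
     \<or> (v \<in> cls V f 2 \<and> u \<in> epn V E v (cls V f 2) \<inter> cls V f 0)"
proof -
  have labels: "\<forall>v\<in>V. f v \<in> {0, 1, 2}"
    using f unfolding is_TRDF_def by blast
  then have bounded: "\<forall>v\<in>V. f v \<le> 2"
    by auto
  have two_dominated: "\<forall>w\<in>V. f w = 0 \<longrightarrow> (\<exists>x\<in>V. {x, w} \<in> E \<and> f x = 2)"
    using f labels by (simp add: is_TRDF_iff_dominated)
  have "\<not> is_TRDF V (E - {{u, v}}) f \<longleftrightarrow>
     (\<exists>w\<in>V. 0 < f w \<and> \<not> (\<exists>x\<in>V. {x, w} \<in> E - {{u, v}} \<and> 0 < f x)) \<or>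
     (\<exists>w\<in>V. f w = 0 \<and> \<not> (\<exists>x\<in>V. {x, w} \<in> E - {{u, v}} \<and> f x = 2))"
    unfolding is_TRDF_iff_dominated[OF labels] by (simp only: de_Morgan_conj ball_simps(10) not_imp)
  then show ?thesis
    unfolding induced_has_isolated_positive_iff[OF bounded]
      lost_two_neighbour_iff[OF two_dominated uv, symmetric] .
qed

lemma b_tR_eq_one_iff:
  assumes "finite E"
  shows "b_tR V E = 1 \<longleftrightarrow>
     (\<exists>e\<in>E. no_isolated V (E - {e}) \<and> gamma_tR V E < gamma_tR V (E - {e}))"
proof -
  define S where "S = {enat (card E') | E'. E' \<subseteq> E \<and> no_isolated V (E - E')
                     \<and> gamma_tR V (E - E') > gamma_tR V E}"
  have S_ge_one: "1 \<le> s" if "s \<in> S" for s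
  proof -
    obtain E' where E': "s = enat (card E')" "E' \<subseteq> E" "gamma_tR V E < gamma_tR V (E - E')"
      using \<open>s \<in> S\<close> unfolding S_def by blast
    then have "E' \<noteq> {}" "finite E'"
      using assms finite_subset by auto
    then show ?thesis
      using E'(1) by (simp add: one_enat_def Suc_le_eq card_gt_0_iff)
  qed
  have "b_tR V E = 1 \<longleftrightarrow> 1 \<in> S"
  proof
    assume "b_tR V E = 1"
    then have "Inf S = 1" "S \<noteq> {}"
      unfolding b_tR_def S_def[symmetric] by (auto simp: top_enat_def)
    then show "1 \<in> S"
      using wellorder_InfI by fastforce
  next
    assume "1 \<in> S"
    then show "b_tR V E = 1"
      unfolding b_tR_def S_def[symmetric] using S_ge_one by (rule cInf_eq_minimum)
  qed
  also have "1 \<in> S \<longleftrightarrow>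
     (\<exists>e\<in>E. no_isolated V (E - {e}) \<and> gamma_tR V E < gamma_tR V (E - {e}))"
    unfolding S_def one_enat_def by (auto simp: eq_commute[of "Suc 0"] card_1_singleton_iff)
  finally show ?thesis .
qed

theorem mainTheorem13:
  fixes V :: "'a set" and E :: "'a set set"
  assumes "simple_graph V E" and "no_isolated V E"
  shows "b_tR V E = 1 \<longleftrightarrow>
    (\<exists>u v. {u, v} \<in> E \<and> no_isolated V (E - {{u, v}}) \<and>
      (\<forall>f. is_gamma_tR_function V E f \<longrightarrow>
         induced_has_isolated (cls V f 1 \<union> cls V f 2) (E - {{u, v}})
         \<or> (u \<in> cls V f 2 \<and> v \<in> epn V E u (cls V f 2) \<inter> cls V f 0)
         \<or> (v \<in> cls V f 2 \<and> u \<in> epn V E v (cls V f 2) \<inter> cls V f 0)))"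
proof -
  have deletion_increases_iff:
    "gamma_tR V E < gamma_tR V (E - {{u, v}}) \<longleftrightarrow>
      (\<forall>f. is_gamma_tR_function V E f \<longrightarrow>
         induced_has_isolated (cls V f 1 \<union> cls V f 2) (E - {{u, v}})
         \<or> (u \<in> cls V f 2 \<and> v \<in> epn V E u (cls V f 2) \<inter> cls V f 0)
         \<or> (v \<in> cls V f 2 \<and> u \<in> epn V E v (cls V f 2) \<inter> cls V f 0))"
    if uv: "{u, v} \<in> E" and no_isolated: "no_isolated V (E - {{u, v}})" for u v
  proof -
    have "u \<in> V" "v \<in> V"
      using assms(1) uv unfolding simple_graph_def by auto
    then show ?thesis
      using gamma_tR_less_iff_no_gamma_function_survives[OF assms(1) no_isolated]
        not_TRDF_delete_edge_iff[OF _ uv]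
      unfolding is_gamma_tR_function_def by blast
  qed
  have "b_tR V E = 1 \<longleftrightarrow>
      (\<exists>e\<in>E. no_isolated V (E - {e}) \<and> gamma_tR V E < gamma_tR V (E - {e}))"
    using b_tR_eq_one_iff simple_graph_finite_edges[OF assms(1)] .
  also have "\<dots> \<longleftrightarrow> (\<exists>u v. {u, v} \<in> E \<and> no_isolated V (E - {{u, v}})
      \<and> gamma_tR V E < gamma_tR V (E - {{u, v}}))"
    by (rule simple_graph_ex_edge_iff[OF assms(1)])
  finally show ?thesis
    using deletion_increases_iff by blast
qed

end
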